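(* Let $n\in\mathbb{N}$ and let $g$ be a nonzero real number. Let $\mathcal{C}=\{q\in\mathbb{R}^n \mid q_1>\dots>q_n\}$ and, for $q\in\mathcal{C}$, $p\in\mathbb{R}^n$, define the $n\times n$ matrices $$Q_{jk}=q_j\delta_{jk},\qquad L_{jk}=p_j\delta_{jk}+\mathrm{i} g\,\frac{1-\delta_{jk}}{q_j-q_k},\qquad j,k=1,\dots,n.$$ Let $A(z)=\det(z\mathbf{1}_n-L)$ and $D(z)=\operatorname{tr}\big(Q\operatorname{adj}(z\mathbf{1}_n-L)\big)$, where $\operatorname{adj}$ denotes the adjugate matrix. Let $\lambda_1>\dots>\lambda_n$ be the eigenvalues of the Hermitian matrix $L$, and let $\phi_1,\dots,\phi_n$ be the angle variables of the rational Calogero--Moser system, i.e. $\phi_k=(UQU^\dagger)_{kk}$ for a unitary matrix $U$ with $ULU^\dagger=\operatorname{diag}(\lambda_1,\dots,\lambda_n)$ (for the Calogero--Moser point $(q,p)$ such $U$ can be chosen so that $UQU^\dagger$ has entries $\phi_j\delta_{jk}-\mathrm{i} g\frac{1-\delta_{jk}}{\lambda_j-\lambda_k}$). Then for every $(q,p)\in\mathcal{C}\times\mathbb{R}^n$ and every $k=1,\dots,n$, $$\mu_k:=\frac{D(\lambda_k)}{A'(\lambda_k)}=\phi_k .$$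
   Context: This concerns the rational Calogero--Moser system with Hamiltonian $H=\frac12\sum_j p_j^2+g^2\sum_{j<k}(q_j-q_k)^{-2}$ on the phase space $T^*\mathcal{C}=\{(q,p)\mid q\in\mathcal{C},p\in\mathbb{R}^n\}$ with symplectic form $\sum_j dq_j\wedge dp_j$. The system arises by Hamiltonian reduction of pairs of Hermitian matrices $(X,P)$ with symplectic form $\operatorname{tr}(dX\wedge dP)$ under the conjugation action of $U(n)$ at the moment map value $[X,P]=\mathrm{i} g(vv^\dagger-\mathbf{1}_n)$, $v=(1,\dots,1)^\dagger$; gauge-fixing $X$ diagonal gives $(Q,L)$ above, while gauge-fixing $P$ diagonal gives the pair $\tilde L=\operatorname{diag}(\lambda)$, $\tilde Q_{jk}=\phi_j\delta_{jk}-\mathrm{i} g\frac{1-\delta_{jk}}{\lambda_j-\lambda_k}$, and $(q,p)\mapsto(\phi,\lambda)$ is a canonical transformation (action-angle variables) with $\sum_j d\phi_j\wedge d\lambda_j$ the transformed symplectic form. *)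

theory Defs
  imports Complex_Main "Jordan_Normal_Form.Determinant" "Jordan_Normal_Form.Char_Poly"
begin

definition mtrace :: "complex mat \<Rightarrow> complex" where
  "mtrace A = (\<Sum>i<dim_row A. A $$ (i,i))"

definition ctrans :: "complex mat \<Rightarrow> complex mat" where
  "ctrans U = mat (dim_col U) (dim_row U) (\<lambda>(i,j). cnj (U $$ (j,i)))"

definition unitary_mat :: "nat \<Rightarrow> complex mat \<Rightarrow> bool" where
  "unitary_mat n U \<longleftrightarrow> U \<in> carrier_mat n n \<and> U * ctrans U = 1\<^sub>m n \<and> ctrans U * U = 1\<^sub>m n"

(* Q_{jk} = q_j delta_{jk} (indices 0..n-1) *)
definition CM_Q :: "nat \<Rightarrow> (nat \<Rightarrow> real) \<Rightarrow> complex mat" where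
  "CM_Q n q = mat n n (\<lambda>(j,k). if j = k then complex_of_real (q j) else 0)"

definition CM_L :: "nat \<Rightarrow> real \<Rightarrow> (nat \<Rightarrow> real) \<Rightarrow> (nat \<Rightarrow> real) \<Rightarrow> complex mat" where
  "CM_L n g q p = mat n n (\<lambda>(j,k). if j = k then complex_of_real (p j)
       else \<i> * complex_of_real g / complex_of_real (q j - q k))"

definition CM_A :: "nat \<Rightarrow> real \<Rightarrow> (nat \<Rightarrow> real) \<Rightarrow> (nat \<Rightarrow> real) \<Rightarrow> complex poly" where
  "CM_A n g q p = char_poly (CM_L n g q p)"

definition CM_D :: "nat \<Rightarrow> real \<Rightarrow> (nat \<Rightarrow> real) \<Rightarrow> (nat \<Rightarrow> real) \<Rightarrow> complex \<Rightarrow> complex" where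
  "CM_D n g q p z = mtrace (CM_Q n q * adj_mat (z \<cdot>\<^sub>m 1\<^sub>m n - CM_L n g q p))"

end

theory Submission
  imports Defs
begin

text \<open>Write \<open>L = U\<^sup>\<dagger> \<Lambda> U\<close> with \<open>\<Lambda> = diag \<lambda>\<close>. Off the spectrum the adjugate is
conjugated along, \<open>adj (z - L) = U\<^sup>\<dagger> adj (z - \<Lambda>) U\<close>, and \<open>adj (z - \<Lambda>)\<close> is diagonal with
\<open>i\<close>-th entry \<open>\<Prod>j\<noteq>i. z - \<lambda> j\<close>. Cyclicity of the trace then gives
\<open>D z = (\<Sum>i. (U Q U\<^sup>\<dagger>) i i * (\<Prod>j\<noteq>i. z - \<lambda> j))\<close>, which extends to all \<open>z\<close> by continuity.
At \<open>z = \<lambda> k\<close> only the \<open>k\<close>-th summand survives, and its product factor is \<open>A' (\<lambda> k)\<close>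
since \<open>A z = (\<Prod>j. z - \<lambda> j)\<close>.\<close>

lemma isCont_det:
  fixes A :: "'b::t2_space \<Rightarrow> 'a::real_normed_field mat"
  assumes "\<And>z. A z \<in> carrier_mat n n"
    and "\<And>i j. i < n \<Longrightarrow> j < n \<Longrightarrow> isCont (\<lambda>z. A z $$ (i,j)) x"
  shows "isCont (\<lambda>z. det (A z)) x"
proof -
  have "isCont (\<lambda>z. \<Sum>p\<in>{p. p permutes {0..<n}}. signof p * (\<Prod>i=0..<n. A z $$ (i, p i))) x"
    by (intro continuous_sum continuous_mult continuous_const continuous_prod assms(2))
       (auto simp: permutes_in_image)
  then show ?thesis using det_def'[OF assms(1)] by simp
qed

lemma isCont_cofactor:
  fixes A :: "'b::t2_space \<Rightarrow> 'a::real_normed_field mat"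
  assumes car: "\<And>z. A z \<in> carrier_mat n n"
    and cont: "\<And>i j. i < n \<Longrightarrow> j < n \<Longrightarrow> isCont (\<lambda>z. A z $$ (i,j)) x"
    and "i < n" "j < n"
  shows "isCont (\<lambda>z. cofactor (A z) i j) x"
proof -
  have "isCont (\<lambda>z. det (mat_delete (A z) i j)) x"
  proof (rule isCont_det)
    fix z show "mat_delete (A z) i j \<in> carrier_mat (n-1) (n-1)"
      using car[of z] by (auto simp: mat_delete_def)
  next
    fix a b assume ab: "a < n - 1" "b < n - 1"
    have "mat_delete (A z) i j $$ (a,b)
        = A z $$ (if a < i then a else Suc a, if b < j then b else Suc b)" for z
      using car[of z] ab by (simp add: mat_delete_def)
    then show "isCont (\<lambda>z. mat_delete (A z) i j $$ (a,b)) x"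
      using ab by (simp add: cont)
  qed
  then show ?thesis unfolding cofactor_def by (intro continuous_intros)
qed

lemma isCont_mtrace_mult_adj_mat:
  fixes A :: "'b::t2_space \<Rightarrow> complex mat"
  assumes Q: "Q \<in> carrier_mat n n" and car: "\<And>z. A z \<in> carrier_mat n n"
    and cont: "\<And>i j. i < n \<Longrightarrow> j < n \<Longrightarrow> isCont (\<lambda>z. A z $$ (i,j)) x"
  shows "isCont (\<lambda>z. mtrace (Q * adj_mat (A z))) x"
proof -
  have "mtrace (Q * adj_mat (A z)) = (\<Sum>i<n. \<Sum>j<n. Q $$ (i,j) * cofactor (A z) i j)" for z
    using Q car[of z] unfolding mtrace_def
    by (auto simp: adj_mat_def scalar_prod_def atLeast0LessThan intro!: sum.cong)
  moreover have "isCont (\<lambda>z. \<Sum>i<n. \<Sum>j<n. Q $$ (i,j) * cofactor (A z) i j) x"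
    by (intro continuous_sum continuous_mult continuous_const isCont_cofactor[OF car cont]) auto
  ultimately show ?thesis by simp
qed

lemma isCont_eq_off_finite:
  fixes f g :: "'a::{perfect_space,t2_space} \<Rightarrow> 'b::t2_space"
  assumes "isCont f x" "isCont g x" "finite S" "\<And>z. z \<notin> S \<Longrightarrow> f z = g z"
  shows "f x = g x"
proof -
  have "\<forall>\<^sub>F z in at x. \<forall>s\<in>S. z \<noteq> s"
    using assms(3) by (intro eventually_ball_finite ballI eventually_neq_at_within)
  then have "\<forall>\<^sub>F z in at x. f z = g z"
    by eventually_elim (use assms(4) in auto)
  then have "(g \<longlongrightarrow> f x) (at x)"
    using assms(1) Lim_transform_eventually by (auto simp: isCont_def)
  then show ?thesis
    using assms(2) by (auto simp: isCont_def intro: tendsto_unique[OF at_neq_bot])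
qed

lemma adj_mat_eqI:
  fixes M X :: "'a::field mat"
  assumes M: "M \<in> carrier_mat n n" and X: "X \<in> carrier_mat n n"
    and det: "det M \<noteq> 0" and MX: "M * X = det M \<cdot>\<^sub>m 1\<^sub>m n"
  shows "adj_mat M = X"
proof -
  have adj: "adj_mat M \<in> carrier_mat n n" "adj_mat M * M = det M \<cdot>\<^sub>m 1\<^sub>m n"
    using adj_mat[OF M] by auto
  have "det M \<cdot>\<^sub>m X = (adj_mat M * M) * X"
    using X by (simp add: adj mult_smult_assoc_mat[OF one_carrier_mat X])
  also have "\<dots> = adj_mat M * (M * X)"
    using adj(1) M X by simp
  also have "\<dots> = det M \<cdot>\<^sub>m adj_mat M"
    using adj(1) by (simp add: MX mult_smult_distrib[OF adj(1) one_carrier_mat])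
  finally have eq: "det M \<cdot>\<^sub>m X = det M \<cdot>\<^sub>m adj_mat M" .
  show ?thesis
  proof (rule eq_matI)
    fix i j assume "i < dim_row X" "j < dim_col X"
    then have "det M * X $$ (i,j) = det M * adj_mat M $$ (i,j)"
      using arg_cong[OF eq, of "\<lambda>B. B $$ (i,j)"] X adj(1) by simp
    then show "adj_mat M $$ (i,j) = X $$ (i,j)"
      using det by simp
  qed (use X adj(1) in auto)
qed

lemma adj_mat_conj:
  fixes A P Q :: "'a::field mat"
  assumes A: "A \<in> carrier_mat n n" and P: "P \<in> carrier_mat n n" and Q: "Q \<in> carrier_mat n n"
    and QP: "Q * P = 1\<^sub>m n" and det: "det A \<noteq> 0"
  shows "adj_mat (P * A * Q) = P * adj_mat A * Q"
proof -
  have PQ: "P * Q = 1\<^sub>m n"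
    using mat_mult_left_right_inverse[OF Q P QP] .
  have det_PAQ: "det (P * A * Q) = det A"
    using det_mult[OF P A] det_mult[OF mult_carrier_mat[OF P A] Q] det_mult[OF P Q] PQ
    by (simp add: algebra_simps)
  have "P * A * Q * (P * adj_mat A * Q) = P * (A * (Q * P) * adj_mat A) * Q"
    using A P Q adj_mat[OF A] by (simp add: assoc_mult_mat[of _ n n _ n _ n])
  also have "\<dots> = det A \<cdot>\<^sub>m (P * Q)"
    using A P adj_mat[OF A] mult_smult_distrib[OF P one_carrier_mat] mult_smult_assoc_mat[OF P Q]
    by (simp add: QP)
  finally have "P * A * Q * (P * adj_mat A * Q) = det (P * A * Q) \<cdot>\<^sub>m 1\<^sub>m n"
    by (simp add: PQ det_PAQ)
  then show ?thesis
    by (rule adj_mat_eqI[rotated 3]) (use A P Q det adj_mat[OF A] det_PAQ in auto)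
qed
lemma diag_mat_mat_diag: "diag_mat (mat_diag n d) = map d [0..<n]"
  unfolding diag_mat_def mat_diag_def by auto

lemma upper_triangular_mat_diag: "upper_triangular (mat_diag n d)"
  unfolding upper_triangular_def mat_diag_def by auto

lemma det_mat_diag: "det (mat_diag n d) = (\<Prod>i<n. d i :: 'a::comm_ring_1)"
proof -
  have "det (mat_diag n d) = prod_list (diag_mat (mat_diag n d))"
    by (rule det_upper_triangular[OF upper_triangular_mat_diag mat_diag_dim])
  then show ?thesis
    by (simp add: diag_mat_mat_diag prod.distinct_set_conv_list[symmetric] atLeast0LessThan)
qed

lemma char_poly_mat_diag: "char_poly (mat_diag n d) = (\<Prod>i<n. [:- d i, 1:] :: 'a::comm_ring_1 poly)"
proof -
  have "char_poly (mat_diag n d) = (\<Prod>a \<leftarrow> diag_mat (mat_diag n d). [:- a, 1:])"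
    by (rule char_poly_upper_triangular[OF mat_diag_dim upper_triangular_mat_diag])
  then show ?thesis
    by (simp add: diag_mat_mat_diag prod.distinct_set_conv_list[symmetric] atLeast0LessThan o_def)
qed

lemma adj_mat_mat_diag:
  fixes d :: "nat \<Rightarrow> 'a::field"
  assumes "\<And>i. i < n \<Longrightarrow> d i \<noteq> 0"
  shows "adj_mat (mat_diag n d) = mat_diag n (\<lambda>i. \<Prod>j\<in>{..<n}-{i}. d j)"
proof (rule adj_mat_eqI)
  show "det (mat_diag n d) \<noteq> 0"
    using assms by (simp add: det_mat_diag)
  have "d i * (\<Prod>j\<in>{..<n}-{i}. d j) = (\<Prod>j<n. d j)" if "i < n" for i
    using prod.remove[of "{..<n}" i d] that by simp
  then show "mat_diag n d * mat_diag n (\<lambda>i. \<Prod>j\<in>{..<n}-{i}. d j) = det (mat_diag n d) \<cdot>\<^sub>m 1\<^sub>m n"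
    unfolding mat_diag_diag det_mat_diag by (auto simp: mat_diag_def intro!: eq_matI)
qed auto

lemma sum_mult_prod_remove_eval:
  fixes x c :: "nat \<Rightarrow> 'a::comm_ring_1"
  assumes "k < n"
  shows "(\<Sum>i<n. c i * (\<Prod>j\<in>{..<n}-{i}. x k - x j)) = c k * (\<Prod>j\<in>{..<n}-{k}. x k - x j)"
proof (subst sum.remove[of _ k])
  have "(\<Prod>j\<in>{..<n}-{i}. x k - x j) = 0" if "i \<in> {..<n} - {k}" for i
    using that assms by (intro prod_zero) auto
  then show "c k * (\<Prod>j\<in>{..<n}-{k}. x k - x j) + (\<Sum>i\<in>{..<n}-{k}. c i * (\<Prod>j\<in>{..<n}-{i}. x k - x j))
      = c k * (\<Prod>j\<in>{..<n}-{k}. x k - x j)"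
    by simp
qed (use assms in auto)

lemma poly_pderiv_prod_linear_eval:
  fixes x :: "nat \<Rightarrow> 'a::idom"
  assumes "k < n"
  shows "poly (pderiv (\<Prod>i<n. [:- x i, 1:])) (x k) = (\<Prod>j\<in>{..<n}-{k}. x k - x j)"
  using sum_mult_prod_remove_eval[OF assms, of "\<lambda>_. 1" x]
  by (simp add: pderiv_prod poly_sum poly_prod pderiv_pCons)

lemma mtrace_mult_comm:
  fixes A B :: "complex mat"
  assumes "A \<in> carrier_mat n n" "B \<in> carrier_mat n n"
  shows "mtrace (A * B) = mtrace (B * A)"
proof -
  have "mtrace (A * B) = (\<Sum>i<n. \<Sum>j<n. A $$ (i,j) * B $$ (j,i))"
    using assms unfolding mtrace_def by (auto simp: scalar_prod_def atLeast0LessThan intro!: sum.cong)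
  also have "\<dots> = (\<Sum>j<n. \<Sum>i<n. B $$ (j,i) * A $$ (i,j))"
    by (subst sum.swap) (simp add: mult.commute)
  also have "\<dots> = mtrace (B * A)"
    using assms unfolding mtrace_def by (auto simp: scalar_prod_def atLeast0LessThan intro!: sum.cong)
  finally show ?thesis .
qed

lemma mtrace_mult_mat_diag:
  "W \<in> carrier_mat n n \<Longrightarrow> mtrace (W * mat_diag n d) = (\<Sum>i<n. W $$ (i,i) * d i)"
  unfolding mtrace_def by (simp add: mat_diag_mult_right)

lemma smult_one_minus_conj_mat_diag:
  fixes U V :: "'a::comm_ring_1 mat"
  assumes U: "U \<in> carrier_mat n n" and V: "V \<in> carrier_mat n n" and VU: "V * U = 1\<^sub>m n"
  shows "z \<cdot>\<^sub>m 1\<^sub>m n - V * mat_diag n d * U = V * mat_diag n (\<lambda>i. z - d i) * U"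
proof -
  have "mat_diag n (\<lambda>i. z - d i) = z \<cdot>\<^sub>m 1\<^sub>m n - mat_diag n d"
    by (rule eq_matI) (auto simp: mat_diag_def)
  moreover have "V * (z \<cdot>\<^sub>m 1\<^sub>m n) * U = z \<cdot>\<^sub>m 1\<^sub>m n"
    using mult_smult_distrib[OF V one_carrier_mat] mult_smult_assoc_mat[OF V U] V VU by simp
  moreover have "V * (z \<cdot>\<^sub>m 1\<^sub>m n - mat_diag n d) * U
      = V * (z \<cdot>\<^sub>m 1\<^sub>m n) * U - V * mat_diag n d * U"
    using U V by (subst mult_minus_distrib_mat[OF V], auto intro!: minus_mult_distrib_mat)
  ultimately show ?thesis
    by simp
qed

lemma mtrace_mult_adj_resolvent_off_spectrum:
  fixes Q U V :: "complex mat"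
  assumes Q: "Q \<in> carrier_mat n n" and U: "U \<in> carrier_mat n n" and V: "V \<in> carrier_mat n n"
    and VU: "V * U = 1\<^sub>m n" and z: "\<And>i. i < n \<Longrightarrow> z \<noteq> d i"
  shows "mtrace (Q * adj_mat (z \<cdot>\<^sub>m 1\<^sub>m n - V * mat_diag n d * U))
       = (\<Sum>i<n. (U * Q * V) $$ (i,i) * (\<Prod>j\<in>{..<n}-{i}. z - d j))"
proof -
  define C where "C = mat_diag n (\<lambda>i. \<Prod>j\<in>{..<n}-{i}. z - d j)"
  have "adj_mat (z \<cdot>\<^sub>m 1\<^sub>m n - V * mat_diag n d * U) = V * C * U"
    unfolding smult_one_minus_conj_mat_diag[OF U V VU] C_def using z
    by (subst adj_mat_conj[OF mat_diag_dim V U]) (auto simp: det_mat_diag adj_mat_mat_diag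
        mat_mult_left_right_inverse[OF V U VU])
  then have "mtrace (Q * adj_mat (z \<cdot>\<^sub>m 1\<^sub>m n - V * mat_diag n d * U)) = mtrace ((Q * V * C) * U)"
    using Q V U by (simp add: C_def assoc_mult_mat[of _ n n _ n _ n])
  also have "\<dots> = mtrace (U * Q * V * C)"
    using Q V U by (subst mtrace_mult_comm[of _ n]) (auto simp: C_def assoc_mult_mat[of _ n n _ n _ n])
  also have "\<dots> = (\<Sum>i<n. (U * Q * V) $$ (i,i) * (\<Prod>j\<in>{..<n}-{i}. z - d j))"
    using Q V U by (simp add: C_def mtrace_mult_mat_diag)
  finally show ?thesis .
qed

lemma mtrace_mult_adj_resolvent:
  fixes Q U V :: "complex mat"
  assumes Q: "Q \<in> carrier_mat n n" and U: "U \<in> carrier_mat n n" and V: "V \<in> carrier_mat n n"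
    and VU: "V * U = 1\<^sub>m n"
  shows "mtrace (Q * adj_mat (z \<cdot>\<^sub>m 1\<^sub>m n - V * mat_diag n d * U))
       = (\<Sum>i<n. (U * Q * V) $$ (i,i) * (\<Prod>j\<in>{..<n}-{i}. z - d j))"
proof -
  define L where "L = V * mat_diag n d * U"
  have L: "L \<in> carrier_mat n n"
    unfolding L_def using U V by (auto intro!: mult_carrier_mat)
  have "isCont (\<lambda>w. (w \<cdot>\<^sub>m 1\<^sub>m n - L) $$ (i,j)) z" if "i < n" "j < n" for i j
    using L that by (cases "i = j") simp_all
  then have "isCont (\<lambda>w. mtrace (Q * adj_mat (w \<cdot>\<^sub>m 1\<^sub>m n - L))) z"
    using L by (intro isCont_mtrace_mult_adj_mat[OF Q]) auto
  moreover have "isCont (\<lambda>w. \<Sum>i<n. (U * Q * V) $$ (i,i) * (\<Prod>j\<in>{..<n}-{i}. w - d j)) z"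
    by (intro continuous_intros)
  ultimately show ?thesis
    unfolding L_def
    by (rule isCont_eq_off_finite[where S = "d ` {..<n}"])
       (use mtrace_mult_adj_resolvent_off_spectrum[OF Q U V VU] in auto)
qed

lemma mtrace_mult_adj_resolvent_eigenvalue:
  fixes Q U V :: "complex mat"
  assumes "Q \<in> carrier_mat n n" "U \<in> carrier_mat n n" "V \<in> carrier_mat n n"
    and "V * U = 1\<^sub>m n" and "k < n"
  shows "mtrace (Q * adj_mat (d k \<cdot>\<^sub>m 1\<^sub>m n - V * mat_diag n d * U))
       = (U * Q * V) $$ (k,k) * (\<Prod>j\<in>{..<n}-{k}. d k - d j)"
  unfolding mtrace_mult_adj_resolvent[OF assms(1-4)] by (rule sum_mult_prod_remove_eval[OF assms(5)])

lemma eq_conj_if_conj_eq: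
  fixes A U V :: "'a::semiring_1 mat"
  assumes A: "A \<in> carrier_mat n n" and U: "U \<in> carrier_mat n n" and V: "V \<in> carrier_mat n n"
    and VU: "V * U = 1\<^sub>m n" and B: "U * A * V = B"
  shows "A = V * B * U"
proof -
  have "V * B * U = (V * U) * A * (V * U)"
    using A U V by (simp add: B[symmetric] assoc_mult_mat[of _ n n _ n _ n])
  then show ?thesis
    using A by (simp add: VU)
qed

theorem mainTheorem1:
  fixes n :: nat and g :: real and q p lambda :: "nat \<Rightarrow> real" and U :: "complex mat"
  assumes "g \<noteq> 0"
    and q_dec: "\<And>j k. j < k \<Longrightarrow> k < n \<Longrightarrow> q j > q k"
    and lam_dec: "\<And>j k. j < k \<Longrightarrow> k < n \<Longrightarrow> lambda j > lambda k"
    and U: "unitary_mat n U"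
    and diag: "U * CM_L n g q p * ctrans U = mat_diag n (\<lambda>j. complex_of_real (lambda j))"
    and "k < n"
  shows "CM_D n g q p (complex_of_real (lambda k)) / poly (pderiv (CM_A n g q p)) (complex_of_real (lambda k))
         = (U * CM_Q n q * ctrans U) $$ (k,k)"
proof -
  define l where "l = (\<lambda>j. complex_of_real (lambda j))"
  define V where "V = ctrans U"
  define P where "P = (\<Prod>j\<in>{..<n}-{k}. l k - l j)"
  have Uc: "U \<in> carrier_mat n n" and UV: "U * V = 1\<^sub>m n" and VU: "V * U = 1\<^sub>m n"
    using U unfolding unitary_mat_def V_def by auto
  have Vc: "V \<in> carrier_mat n n"
    using Uc unfolding V_def ctrans_def by auto
  have Qc: "CM_Q n q \<in> carrier_mat n n" and Lc: "CM_L n g q p \<in> carrier_mat n n"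
    unfolding CM_Q_def CM_L_def by auto
  have L: "CM_L n g q p = V * mat_diag n l * U"
    using eq_conj_if_conj_eq[OF Lc Uc Vc VU] diag unfolding V_def l_def by simp
  have "CM_D n g q p (l k) = (U * CM_Q n q * V) $$ (k,k) * P"
    unfolding CM_D_def L P_def using mtrace_mult_adj_resolvent_eigenvalue[OF Qc Uc Vc VU \<open>k < n\<close>] .
  moreover have "similar_mat (CM_L n g q p) (mat_diag n l)"
    unfolding L using Uc Vc UV VU by (intro similar_matI[where n=n]) auto
  then have "poly (pderiv (CM_A n g q p)) (l k) = P"
    unfolding CM_A_def P_def
    by (simp add: char_poly_similar char_poly_mat_diag poly_pderiv_prod_linear_eval \<open>k < n\<close>)
  moreover have "l k \<noteq> l j" if "j < n" "j \<noteq> k" for j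
    using lam_dec[of j k] lam_dec[of k j] that \<open>k < n\<close> by (cases "j < k") (auto simp: l_def)
  then have "P \<noteq> 0"
    unfolding P_def by simp
  ultimately show ?thesis
    unfolding l_def V_def by simp
qed

end
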